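(* Let $G=(V,E)$ be a finite simple graph. A measurement schedule on $|G\rangle$ is optimal if it is given by a path decomposition of $G$ of minimal width; in particular, $\operatorname{sc}(|G\rangle)=\operatorname{pw}(G)+1$.
   Context: The graph state of $G$ is $|G\rangle=\left(\prod_{e\in E} CZ_e\right)|+\rangle^{\otimes V}$, with one qubit per vertex. A measurement schedule on $|G\rangle$ is represented by a sequence $(X_i)_{i=1}^n$ of subsets of $V$, where $X_i$ is the set of active qubits (initialised but not yet measured) at step $i$, satisfying: (M1) each qubit is initialised exactly once (every $v\in V$ lies in some $X_i$, and the indices $i$ with $v\in X_i$ form a contiguous block, after which $v$ is measured); (M2) a qubit is measured only after all its neighbours have been initialised (if $j$ is the last index with $v\in X_j$, every neighbour of $v$ lies in some $X_i$ with $i\le j$). The cost of a measurement schedule is $\max_i |X_i|$; the spatial cost $\operatorname{sc}(|G\rangle)$ is the minimum cost over all measurement schedules on $|G\rangle$, and a schedule is optimal if its cost equals the spatial cost. A path decomposition of $G$ is a sequence $(X_i)_{i=1}^n$ of subsets of $V$ such that (P1) every vertex lies in some $X_i$, (P2) every edge is contained in some $X_i$, (P3) for $i\le j\le k$, $v\in X_i\cap X_k$ implies $v\in X_j$. Its width is $\max_i|X_i|-1$, and the pathwidth $\operatorname{pw}(G)$ is the minimum width over all path decompositions of $G$. *)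

theory Defs
  imports Main
begin

definition simple_graph :: "'a set \<Rightarrow> 'a set set \<Rightarrow> bool" where
  "simple_graph V E \<longleftrightarrow> finite V \<and> (\<forall>e\<in>E. e \<subseteq> V \<and> card e = 2)"

definition is_path_decomposition :: "'a set \<Rightarrow> 'a set set \<Rightarrow> 'a set list \<Rightarrow> bool" where
  "is_path_decomposition V E Xs \<longleftrightarrow>
     (\<forall>i<length Xs. Xs ! i \<subseteq> V) \<and>
     (\<forall>v\<in>V. \<exists>i<length Xs. v \<in> Xs ! i) \<and>
     (\<forall>e\<in>E. \<exists>i<length Xs. e \<subseteq> Xs ! i) \<and>
     (\<forall>i j k v. i \<le> j \<and> j \<le> k \<and> k < length Xs \<and> v \<in> Xs ! i \<and> v \<in> Xs ! k \<longrightarrow> v \<in> Xs ! j)"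

definition max_bag :: "'a set list \<Rightarrow> nat" where
  "max_bag Xs = Max (insert 0 (card ` set Xs))"

definition pd_width :: "'a set list \<Rightarrow> int" where
  "pd_width Xs = int (max_bag Xs) - 1"

definition pathwidth :: "'a set \<Rightarrow> 'a set set \<Rightarrow> int" where
  "pathwidth V E = Min (pd_width ` {Xs. is_path_decomposition V E Xs})"

definition is_measurement_schedule :: "'a set \<Rightarrow> 'a set set \<Rightarrow> 'a set list \<Rightarrow> bool" where
  "is_measurement_schedule V E Xs \<longleftrightarrow>
     (\<forall>i<length Xs. Xs ! i \<subseteq> V) \<and>
     \<comment> \<open>(M1) every qubit initialised, active indices contiguous\<close>
     (\<forall>v\<in>V. \<exists>i<length Xs. v \<in> Xs ! i) \<and>
     (\<forall>i j k v. i \<le> j \<and> j \<le> k \<and> k < length Xs \<and> v \<in> Xs ! i \<and> v \<in> Xs ! k \<longrightarrow> v \<in> Xs ! j) \<and>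
     \<comment> \<open>(M2) at the last active index j of v, all neighbours initialised\<close>
     (\<forall>v j. j < length Xs \<and> v \<in> Xs ! j \<and> (\<forall>k. j < k \<and> k < length Xs \<longrightarrow> v \<notin> Xs ! k) \<longrightarrow>
        (\<forall>u. {u, v} \<in> E \<longrightarrow> (\<exists>i\<le>j. u \<in> Xs ! i)))"

definition schedule_cost :: "'a set list \<Rightarrow> nat" where
  "schedule_cost Xs = max_bag Xs"

definition spatial_cost :: "'a set \<Rightarrow> 'a set set \<Rightarrow> nat" where
  "spatial_cost V E = Min (schedule_cost ` {Xs. is_measurement_schedule V E Xs})"

definition optimal_schedule :: "'a set \<Rightarrow> 'a set set \<Rightarrow> 'a set list \<Rightarrow> bool" where
  "optimal_schedule V E Xs \<longleftrightarrow> is_measurement_schedule V E Xs \<and> schedule_cost Xs = spatial_cost V E"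

end

theory Submission
  imports Defs
begin

text \<open>For a simple graph the two notions coincide: (M1) is (P1) together with (P3), and (M2)
  is equivalent to (P2). Given (P2), a bag containing an edge \<open>{u, v}\<close> precedes the last bag of
  \<open>v\<close>. Conversely, if \<open>u\<close> leaves no later than \<open>v\<close>, then by (M2) \<open>v\<close> was initialised before \<open>u\<close>
  leaves, so by contiguity both lie in the last bag of \<open>u\<close>. Hence schedules and path
  decompositions are the same sequences with the same cost \<open>max\<^sub>i |X\<^sub>i|\<close>, which is the width plus
  one.\<close>

lemma last_bag_containing:
  assumes "\<exists>i<length Xs. v \<in> Xs ! i"
  shows "\<exists>j<length Xs. v \<in> Xs ! j \<and> (\<forall>k. j < k \<and> k < length Xs \<longrightarrow> v \<notin> Xs ! k)"
proof -
  let ?J = "{j. j < length Xs \<and> v \<in> Xs ! j}"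
  have finite: "finite ?J" by simp
  have last: "Max ?J \<in> ?J" using Max_in[OF finite] assms by blast
  have later: "v \<notin> Xs ! k" if "Max ?J < k" "k < length Xs" for k
  proof
    assume "v \<in> Xs ! k"
    with \<open>k < length Xs\<close> have "k \<le> Max ?J" by (simp add: Max_ge[OF finite])
    with \<open>Max ?J < k\<close> show False by simp
  qed
  from last later show ?thesis by blast
qed

lemma path_decomposition_is_measurement_schedule:
  assumes "is_path_decomposition V E Xs"
  shows "is_measurement_schedule V E Xs"
proof -
  note P = assms[unfolded is_path_decomposition_def]
  note edges_covered = P[THEN conjunct2, THEN conjunct2, THEN conjunct1]
  have "\<forall>v j. j < length Xs \<and> v \<in> Xs ! j \<and> (\<forall>k. j < k \<and> k < length Xs \<longrightarrow> v \<notin> Xs ! k) \<longrightarrow>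
      (\<forall>u. {u, v} \<in> E \<longrightarrow> (\<exists>i\<le>j. u \<in> Xs ! i))"
  proof (intro allI impI)
    fix v j u
    assume last: "j < length Xs \<and> v \<in> Xs ! j \<and> (\<forall>k. j < k \<and> k < length Xs \<longrightarrow> v \<notin> Xs ! k)"
      and "{u, v} \<in> E"
    then obtain i where i: "i < length Xs" "{u, v} \<subseteq> Xs ! i"
      using edges_covered by blast
    have "i \<le> j"
    proof (rule ccontr)
      assume "\<not> i \<le> j"
      with last i show False by simp
    qed
    with i show "\<exists>i\<le>j. u \<in> Xs ! i" by blast
  qed
  with P show ?thesis
    unfolding is_measurement_schedule_def by (elim conjE) (intro conjI)
qed

lemma measurement_schedule_is_path_decomposition:
  assumes graph: "simple_graph V E" and schedule: "is_measurement_schedule V E Xs"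
  shows "is_path_decomposition V E Xs"
proof -
  note M = schedule[unfolded is_measurement_schedule_def]
  note covered = M[THEN conjunct2, THEN conjunct1, rule_format]
  note contiguous = M[THEN conjunct2, THEN conjunct2, THEN conjunct1, rule_format]
  note neighbours_initialised = M[THEN conjunct2, THEN conjunct2, THEN conjunct2, rule_format]
  note last_bag = last_bag_containing[OF covered]
  have edge_in_bag: "\<exists>i<length Xs. {u, v} \<subseteq> Xs ! i"
    if edge: "{v, u} \<in> E" and ju: "ju < length Xs" "u \<in> Xs ! ju"
      "\<forall>k. ju < k \<and> k < length Xs \<longrightarrow> u \<notin> Xs ! k"
      and jv: "jv < length Xs" "v \<in> Xs ! jv" and "ju \<le> jv" for u v ju jv
  proof -
    obtain i where "i \<le> ju" "v \<in> Xs ! i"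
      using neighbours_initialised[of ju u v] ju edge by blast
    with contiguous[of i ju jv v] jv \<open>ju \<le> jv\<close> have "v \<in> Xs ! ju" by blast
    with ju show ?thesis by blast
  qed
  have "\<exists>i<length Xs. e \<subseteq> Xs ! i" if "e \<in> E" for e
  proof -
    from graph \<open>e \<in> E\<close> have "e \<subseteq> V" "card e = 2"
      unfolding simple_graph_def by auto
    then obtain u v where e: "e = {u, v}" "u \<in> V" "v \<in> V"
      by (auto simp: card_2_iff)
    have "{u, v} \<in> E" "{v, u} \<in> E"
      using \<open>e \<in> E\<close> e by (simp_all add: insert_commute)
    with last_bag[OF \<open>u \<in> V\<close>] last_bag[OF \<open>v \<in> V\<close>] edge_in_bag
    have "\<exists>i<length Xs. {u, v} \<subseteq> Xs ! i \<or> {v, u} \<subseteq> Xs ! i"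
      by (metis nle_le)
    with e show ?thesis by auto
  qed
  then have "\<forall>e\<in>E. \<exists>i<length Xs. e \<subseteq> Xs ! i" by blast
  with M show ?thesis unfolding is_path_decomposition_def by (elim conjE) (intro conjI)
qed

lemma measurement_schedule_iff_path_decomposition:
  "simple_graph V E \<Longrightarrow> is_measurement_schedule V E Xs \<longleftrightarrow> is_path_decomposition V E Xs"
  using measurement_schedule_is_path_decomposition path_decomposition_is_measurement_schedule
  by blast

lemma single_bag_path_decomposition:
  "\<Union>E \<subseteq> V \<Longrightarrow> is_path_decomposition V E [V]"
  unfolding is_path_decomposition_def by auto

lemma max_bag_path_decomposition_le:
  assumes "finite V" "is_path_decomposition V E Xs"
  shows "max_bag Xs \<le> card V"
proof -
  have "\<forall>X\<in>set Xs. card X \<le> card V"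
    using assms unfolding is_path_decomposition_def by (metis card_mono in_set_conv_nth)
  then show ?thesis unfolding max_bag_def by simp
qed

lemma pathwidth_eq_Min_max_bag:
  assumes "simple_graph V E"
  shows "pathwidth V E = int (Min (max_bag ` {Xs. is_path_decomposition V E Xs})) - 1"
proof -
  let ?A = "max_bag ` {Xs. is_path_decomposition V E Xs}"
  have "finite V" "\<Union>E \<subseteq> V" using assms unfolding simple_graph_def by auto
  then have nonempty: "?A \<noteq> {}" using single_bag_path_decomposition by blast
  have finite: "finite ?A"
    by (rule finite_subset[of _ "{0..card V}"])
      (auto dest: max_bag_path_decomposition_le[OF \<open>finite V\<close>])
  have "pd_width ` {Xs. is_path_decomposition V E Xs} = (\<lambda>n. int n - 1) ` ?A"
    unfolding pd_width_def image_image ..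
  then show ?thesis
    unfolding pathwidth_def
    by (simp add: mono_Min_commute[OF _ finite nonempty, of "\<lambda>n. int n - 1"] mono_def)
qed

theorem corollary1:
  fixes V :: "'a set" and E :: "'a set set"
  assumes "simple_graph V E"
  shows "(\<forall>Xs. is_path_decomposition V E Xs \<and> pd_width Xs = pathwidth V E
              \<longrightarrow> optimal_schedule V E Xs)
         \<and> int (spatial_cost V E) = pathwidth V E + 1"
proof -
  have "spatial_cost V E = Min (max_bag ` {Xs. is_path_decomposition V E Xs})"
    unfolding spatial_cost_def schedule_cost_def
      measurement_schedule_iff_path_decomposition[OF assms] ..
  then have cost: "int (spatial_cost V E) = pathwidth V E + 1"
    using pathwidth_eq_Min_max_bag[OF assms] by simp
  moreover have "optimal_schedule V E Xs"
    if "is_path_decomposition V E Xs" "pd_width Xs = pathwidth V E" for Xs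
    using that cost path_decomposition_is_measurement_schedule
    unfolding optimal_schedule_def schedule_cost_def pd_width_def by simp
  ultimately show ?thesis by blast
qed

end
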